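(* Let $1<q<2$. Then for every $u\in C^\infty_0(\mathbb{R}^2)$, \[ \mathcal{T}_q\,\left(\int_{\mathbb{R}^2} |u|^\frac{4\,q}{2-q}\, dx\right)^\frac{2-q}{2\,q}\le \left(\int_{\mathbb{R}^2} |u_{x_1}|^2\, dx\right)^\frac{1}{2}\,\left(\int_{\mathbb{R}^2} |u_{x_2}|^q\, dx\right)^\frac{1}{q}, \qquad\text{where }\ \mathcal{T}_q=\frac{(2-q)^2}{4\,q^2-(2-q)^2}>0. \] *)

theory Defs
  imports "HOL-Analysis.Analysis"
begin

text \<open>Functions on R^2 are modelled as functions on real \<times> real; the
first component is x1, the second x2.\<close>

definition partial1 :: "(real \<times> real \<Rightarrow> real) \<Rightarrow> real \<times> real \<Rightarrow> real" where
  "partial1 f = (\<lambda>(x, y). deriv (\<lambda>t. f (t, y)) x)"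

definition partial2 :: "(real \<times> real \<Rightarrow> real) \<Rightarrow> real \<times> real \<Rightarrow> real" where
  "partial2 f = (\<lambda>(x, y). deriv (\<lambda>t. f (x, t)) y)"

fun Ck :: "nat \<Rightarrow> (real \<times> real \<Rightarrow> real) \<Rightarrow> bool" where
  "Ck 0 f = continuous_on UNIV f"
| "Ck (Suc k) f = (f differentiable_on UNIV \<and> Ck k (partial1 f) \<and> Ck k (partial2 f))"

definition smooth2 :: "(real \<times> real \<Rightarrow> real) \<Rightarrow> bool" where
  "smooth2 f = (\<forall>k. Ck k f)"

definition C_infty_0 :: "(real \<times> real \<Rightarrow> real) \<Rightarrow> bool" where
  "C_infty_0 f = (smooth2 f \<and> compact (closure {x. f x \<noteq> 0}))"

end

theory Submission
  imports Defs
begin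

(* Choose s, t > 1 with s + t = p = 4q/(2-q). Integrating the derivative of |u|^s along horizontal
   lines and that of |u|^t along vertical lines bounds |u(x1,x2)|^p by a function of x2 times a
   function of x1, so by Fubini
     \<integral>|u|^p \<le> s t (\<integral>|u|^(s-1) |u_x1|) (\<integral>|u|^(t-1) |u_x2|).
   With s - 1 = p/2 and t - 1 = p/q' (q' the conjugate exponent of q), Hoelder's inequality bounds
   the two factors by (\<integral>|u|^p)^(1/2) \<parallel>u_x1\<parallel>_2 and (\<integral>|u|^p)^(1/q') \<parallel>u_x2\<parallel>_q; dividing by these
   powers of \<integral>|u|^p leaves the claim with the constant 1/(s t) = T_q. Nothing changes if 2 and q
   are replaced by any exponents m, r > 1. *)

lemma has_real_derivative_abs_powr:
  fixes s r :: real
  assumes s: "1 < s"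
  shows "((\<lambda>y. \<bar>y\<bar> powr s) has_real_derivative s * \<bar>r\<bar> powr (s - 1) * sgn r) (at r)"
proof -
  consider "0 < r" | "r < 0" | "r = 0" by linarith
  then show ?thesis
  proof cases
    case 1
    have "eventually (\<lambda>y. \<bar>y\<bar> powr s = y powr s) (nhds r)"
      using eventually_nhds_in_open[of "{0<..}" r] 1 by (auto elim!: eventually_mono)
    then show ?thesis
      by (subst DERIV_cong_ev[OF refl _ refl]) (use 1 has_real_derivative_powr[of r s] in simp_all)
  next
    case 2
    have "eventually (\<lambda>y. \<bar>y\<bar> powr s = (- y) powr s) (nhds r)"
      using eventually_nhds_in_open[of "{..<0}" r] 2 by (auto elim!: eventually_mono)
    moreover have "((\<lambda>y. (- y) powr s) has_real_derivative s * (- r) powr (s - 1) * (- 1)) (at r)"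
      using 2 by (auto intro!: derivative_eq_intros)
    ultimately show ?thesis
      by (subst DERIV_cong_ev[OF refl _ refl]) (use 2 in simp_all)
  next
    case 3
    have lim: "((\<lambda>y. \<bar>y\<bar> powr (s - 1)) \<longlongrightarrow> 0) (at 0)"
      by (rule tendsto_zero_powrI) (use s in \<open>auto intro!: tendsto_eq_intros\<close>)
    have bound: "norm (\<bar>y\<bar> powr s / y) \<le> \<bar>y\<bar> powr (s - 1)" for y :: real
    proof (cases "y = 0")
      case False
      then have "\<bar>y\<bar> powr s = \<bar>y\<bar> powr (s - 1) * \<bar>y\<bar>"
        by (simp add: powr_diff)
      then show ?thesis
        using False by (simp add: abs_mult)
    qed simp
    have "((\<lambda>y. \<bar>y\<bar> powr s / y) \<longlongrightarrow> 0) (at 0)"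
      using Lim_null_comparison[OF always_eventually[OF allI[OF bound]] lim] .
    then show ?thesis
      using 3 s by (simp add: DERIV_def)
  qed
qed

lemma borel_integrable_compact_support:
  fixes g :: "'a::euclidean_space \<Rightarrow> real"
  assumes "continuous_on UNIV g" "compact K" "\<And>z. z \<notin> K \<Longrightarrow> g z = 0"
  shows "integrable lborel g"
proof -
  have "integrable lborel (\<lambda>z. indicator K z *\<^sub>R g z)"
    by (rule borel_integrable_compact) (auto intro: continuous_on_subset assms)
  moreover have "(\<lambda>z. indicator K z *\<^sub>R g z) = g"
    using assms(3) by (auto simp: fun_eq_iff indicator_def)
  ultimately show ?thesis by simp
qed

lemma abs_powr_le_integral_abs_powr_deriv:
  fixes v v' :: "real \<Rightarrow> real"
  assumes s: "1 < s" and v': "\<And>t. (v has_real_derivative v' t) (at t)" "continuous_on UNIV v'"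
    and K: "compact K" "\<And>t. t \<notin> K \<Longrightarrow> v t = 0"
  shows "\<bar>v x\<bar> powr s \<le> (\<integral>t. s * \<bar>v t\<bar> powr (s - 1) * \<bar>v' t\<bar> \<partial>lborel)"
proof -
  define g where "g t = s * \<bar>v t\<bar> powr (s - 1) * \<bar>v' t\<bar>" for t
  have "continuous_on UNIV v"
    using v'(1) by (meson DERIV_isCont continuous_at_imp_continuous_on)
  then have g_cont: "continuous_on UNIV g"
    unfolding g_def using s by (intro continuous_intros continuous_on_powr' v'(2)) auto
  have g_nonneg: "0 \<le> g t" for t
    using s by (simp add: g_def)
  have g_int: "integrable lborel g"
    by (rule borel_integrable_compact_support[OF g_cont K(1)]) (use K(2) s in \<open>simp add: g_def\<close>)
  show ?thesis
  proof (cases "x \<in> K")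
    case False
    then show ?thesis
      using K(2) g_nonneg by (simp add: g_def integral_nonneg)
  next
    case True
    obtain B where B: "\<And>t. t \<in> K \<Longrightarrow> \<bar>t\<bar> \<le> B"
      using compact_imp_bounded[OF K(1)] by (auto simp: bounded_iff)
    define a where "a = - B - 1"
    have "a \<le> x" "v a = 0"
      using B[of x] B[of a] True K(2)[of a] by (auto simp: a_def)
    define f' where "f' t = s * \<bar>v t\<bar> powr (s - 1) * sgn (v t) * v' t" for t
    have "((\<lambda>t. \<bar>v t\<bar> powr s) has_real_derivative f' t) (at t)" for t
      unfolding f'_def using DERIV_chain2[OF has_real_derivative_abs_powr[OF s] v'(1)] .
    then have "(f' has_integral \<bar>v x\<bar> powr s) {a..x}"
      using fundamental_theorem_of_calculus[OF \<open>a \<le> x\<close>, of "\<lambda>t. \<bar>v t\<bar> powr s" f'] \<open>v a = 0\<close> s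
      by (auto intro: has_vector_derivative_at_within
          simp: has_real_derivative_iff_has_vector_derivative)
    moreover have g_ax: "(g has_integral integral {a..x} g) {a..x}"
      by (intro integrable_integral integrable_continuous_interval continuous_on_subset[OF g_cont]) auto
    moreover have "f' t \<le> g t" for t
    proof -
      have "sgn (v t) * v' t \<le> \<bar>v' t\<bar>"
        by (auto simp: sgn_if)
      then show ?thesis
        unfolding f'_def g_def using s by (simp add: mult.assoc mult_left_mono)
    qed
    ultimately have "\<bar>v x\<bar> powr s \<le> integral {a..x} g"
      by (rule has_integral_le)
    also have "\<dots> \<le> integral UNIV g"
      by (rule integral_subset_le) (use g_ax has_integral_integral_real[OF g_int] g_nonneg in auto)
    also have "\<dots> = (\<integral>t. g t \<partial>lborel)"
      by (rule integral_unique[OF has_integral_integral_real[OF g_int]])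
    finally show ?thesis
      by (simp add: g_def)
  qed
qed

lemma Holder_inequality:
  fixes f g :: "'a \<Rightarrow> real"
  assumes p: "1 < p" "1 < q" "1 / p + 1 / q = 1" and nonneg: "\<And>x. 0 \<le> f x" "\<And>x. 0 \<le> g x"
    and int: "integrable M (\<lambda>x. f x * g x)" "integrable M (\<lambda>x. f x powr p)"
      "integrable M (\<lambda>x. g x powr q)"
  shows "(\<integral>x. f x * g x \<partial>M) \<le> (\<integral>x. f x powr p \<partial>M) powr (1 / p) * (\<integral>x. g x powr q \<partial>M) powr (1 / q)"
proof -
  define A where "A = (\<integral>x. f x powr p \<partial>M)"
  define B where "B = (\<integral>x. g x powr q \<partial>M)"
  have "0 \<le> A" "0 \<le> B"
    unfolding A_def B_def by (auto intro: integral_nonneg)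
  show ?thesis
  proof (cases "A = 0 \<or> B = 0")
    case True
    then have "AE x in M. f x powr p = 0 \<or> g x powr q = 0"
      using int nonneg by (auto simp: A_def B_def integral_nonneg_eq_0_iff_AE elim: AE_mp)
    then have "AE x in M. f x * g x = 0"
      by eventually_elim auto
    then show ?thesis
      by (simp add: integral_eq_zero_AE)
  next
    case False
    define a where "a = A powr (1 / p)"
    define b where "b = B powr (1 / q)"
    have ab: "0 < a" "0 < b" "a powr p = A" "b powr q = B"
      using False \<open>0 \<le> A\<close> \<open>0 \<le> B\<close> p by (auto simp: a_def b_def powr_powr)
    have Young: "f x * g x / (a * b) \<le> f x powr p / (p * A) + g x powr q / (q * B)" for x
    proof -
      have "(f x / a) * (g x / b) \<le> (f x / a) powr p / p + (g x / b) powr q / q"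
        by (rule Youngs_inequality) (use p nonneg ab in auto)
      also have "\<dots> = f x powr p / (p * A) + g x powr q / (q * B)"
        using nonneg ab by (simp add: powr_divide mult.commute)
      finally show ?thesis by simp
    qed
    have "(\<integral>x. f x * g x \<partial>M) / (a * b) = (\<integral>x. f x * g x / (a * b) \<partial>M)"
      by simp
    also have "\<dots> \<le> (\<integral>x. f x powr p / (p * A) + g x powr q / (q * B) \<partial>M)"
      by (rule integral_mono) (use int Young in auto)
    also have "\<dots> = 1"
      using int False p by (simp add: A_def B_def)
    finally show ?thesis
      using ab by (simp add: a_def b_def A_def B_def divide_le_eq)
  qed
qed

lemma (in pair_sigma_finite) integral_le_mult_integral_if_le_mult:
  fixes P :: "'a \<times> 'b \<Rightarrow> real"
  assumes "integrable (M1 \<Otimes>\<^sub>M M2) P" "integrable M1 G" "integrable M2 F"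
    and "\<And>x y. P (x, y) \<le> G x * F y"
  shows "integral\<^sup>L (M1 \<Otimes>\<^sub>M M2) P \<le> integral\<^sup>L M1 G * integral\<^sup>L M2 F"
proof -
  have "integral\<^sup>L (M1 \<Otimes>\<^sub>M M2) P = (\<integral>x. (\<integral>y. P (x, y) \<partial>M2) \<partial>M1)"
    using integral_fst'[OF assms(1)] by simp
  also have "\<dots> \<le> (\<integral>x. G x * integral\<^sup>L M2 F \<partial>M1)"
  proof (rule integral_mono_AE)
    show "AE x in M1. (\<integral>y. P (x, y) \<partial>M2) \<le> G x * integral\<^sup>L M2 F"
      using AE_integrable_fst'[OF assms(1)]
    proof eventually_elim
      case (elim x)
      then show ?case
        using integral_mono[OF elim, of "\<lambda>y. G x * F y"] assms(3,4) by simp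
    qed
  qed (use integrable_fst'[OF assms(1)] assms(2) in simp_all)
  also have "\<dots> = integral\<^sup>L M1 G * integral\<^sup>L M2 F"
    by simp
  finally show ?thesis .
qed

lemma powr_one_minus_le_if_le_mult_powr:
  fixes x K a :: real
  assumes "0 \<le> x" "0 \<le> K" "x \<le> K * x powr a"
  shows "x powr (1 - a) \<le> K"
proof (cases "x = 0")
  case False
  with assms have "x / x powr a \<le> K"
    by (simp add: divide_le_eq)
  with False assms(1) show ?thesis
    by (simp add: powr_diff)
qed (use assms in simp)

lemma has_real_derivative_partial1_at:
  assumes "u differentiable (at (x, y))"
  shows "((\<lambda>t. u (t, y)) has_real_derivative partial1 u (x, y)) (at x)"
proof -
  have "(\<lambda>t. (t, y)) differentiable (at x)"
    by (auto intro!: derivative_eq_intros simp: differentiable_def)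
  then have "(u \<circ> (\<lambda>t. (t, y))) differentiable (at x)"
    using assms by (rule differentiable_chain_at)
  then show ?thesis
    by (simp add: partial1_def o_def flip: DERIV_deriv_iff_real_differentiable)
qed

lemma has_real_derivative_partial2_at:
  assumes "u differentiable (at (x, y))"
  shows "((\<lambda>t. u (x, t)) has_real_derivative partial2 u (x, y)) (at y)"
proof -
  have "(\<lambda>t. (x, t)) differentiable (at y)"
    by (auto intro!: derivative_eq_intros simp: differentiable_def)
  then have "(u \<circ> (\<lambda>t. (x, t))) differentiable (at y)"
    using assms by (rule differentiable_chain_at)
  then show ?thesis
    by (simp add: partial2_def o_def flip: DERIV_deriv_iff_real_differentiable)
qed

lemma partial1_eq_0_outside_closure_support:
  assumes "z \<notin> closure {w. u w \<noteq> 0}"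
  shows "partial1 u z = 0"
proof -
  obtain x y where z: "z = (x, y)"
    by (cases z)
  have open_preimage: "open ((\<lambda>t. (t, y)) -` (- closure {w. u w \<noteq> 0}))"
    by (rule open_vimage) (auto intro!: continuous_intros)
  have "eventually (\<lambda>t. (t, y) \<notin> closure {w. u w \<noteq> 0}) (nhds x)"
    using eventually_nhds_in_open[OF open_preimage, of x] assms z by simp
  then have "eventually (\<lambda>t. u (t, y) = 0) (nhds x)"
    by (rule eventually_mono) (meson closure_subset mem_Collect_eq subsetD)
  then show ?thesis
    using deriv_cong_ev[of "\<lambda>t. u (t, y)" "\<lambda>_. 0" x x] z by (simp add: partial1_def)
qed

lemma partial2_eq_0_outside_closure_support:
  assumes "z \<notin> closure {w. u w \<noteq> 0}"
  shows "partial2 u z = 0"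
proof -
  obtain x y where z: "z = (x, y)"
    by (cases z)
  have open_preimage: "open ((\<lambda>t. (x, t)) -` (- closure {w. u w \<noteq> 0}))"
    by (rule open_vimage) (auto intro!: continuous_intros)
  have "eventually (\<lambda>t. (x, t) \<notin> closure {w. u w \<noteq> 0}) (nhds y)"
    using eventually_nhds_in_open[OF open_preimage, of y] assms z by simp
  then have "eventually (\<lambda>t. u (x, t) = 0) (nhds y)"
    by (rule eventually_mono) (meson closure_subset mem_Collect_eq subsetD)
  then show ?thesis
    using deriv_cong_ev[of "\<lambda>t. u (x, t)" "\<lambda>_. 0" y y] z by (simp add: partial2_def)
qed

locale C1_compact_support =
  fixes u :: "real \<times> real \<Rightarrow> real"
  assumes C1: "Ck 1 u" and compact_closure_support: "compact (closure {z. u z \<noteq> 0})"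
begin

(* A named constant: with the closure itself in its premise, eq_0_outside_support would make the
   simplifier loop. *)
definition support :: "(real \<times> real) set" where
  "support = closure {z. u z \<noteq> 0}"

lemma compact_support: "compact support"
  unfolding support_def by (rule compact_closure_support)

lemma eq_0_outside_support: "z \<notin> support \<Longrightarrow> u z = 0"
  unfolding support_def by (meson closure_subset mem_Collect_eq subsetD)

lemma partial1_eq_0_outside_support: "z \<notin> support \<Longrightarrow> partial1 u z = 0"
  unfolding support_def by (rule partial1_eq_0_outside_closure_support)

lemma partial2_eq_0_outside_support: "z \<notin> support \<Longrightarrow> partial2 u z = 0"
  unfolding support_def by (rule partial2_eq_0_outside_closure_support)

lemma integrable_vanishing_outside_support:
  fixes g :: "real \<times> real \<Rightarrow> real"
  assumes "continuous_on UNIV g" "\<And>z. z \<notin> support \<Longrightarrow> g z = 0"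
  shows "integrable lborel g"
  using borel_integrable_compact_support[OF assms(1) compact_support assms(2)] .

lemma differentiable_on_u: "u differentiable_on UNIV"
  and continuous_on_partial1: "continuous_on UNIV (partial1 u)"
  and continuous_on_partial2: "continuous_on UNIV (partial2 u)"
  using C1 by simp_all

lemma continuous_on_u: "continuous_on UNIV u"
  using differentiable_on_u by (rule differentiable_imp_continuous_on)

lemma continuous_on_abs_powr: "0 < a \<Longrightarrow> continuous_on UNIV (\<lambda>z. \<bar>u z\<bar> powr a)"
  by (intro continuous_on_powr' continuous_intros continuous_on_u) auto

lemma has_real_derivative_partial1:
  "((\<lambda>t. u (t, y)) has_real_derivative partial1 u (x, y)) (at x)"
  using differentiable_on_u by (intro has_real_derivative_partial1_at) (simp add: differentiable_on_def)

lemma has_real_derivative_partial2: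
  "((\<lambda>t. u (x, t)) has_real_derivative partial2 u (x, y)) (at y)"
  using differentiable_on_u by (intro has_real_derivative_partial2_at) (simp add: differentiable_on_def)

lemma compact_fst_support: "compact (fst ` support)"
  and compact_snd_support: "compact (snd ` support)"
  by (intro compact_continuous_image continuous_intros compact_support)+

lemma integral_abs_powr_le_product:
  assumes s: "1 < s" and t: "1 < t"
  shows "(\<integral>z. \<bar>u z\<bar> powr (s + t) \<partial>lborel)
    \<le> s * t * (\<integral>z. \<bar>u z\<bar> powr (s - 1) * \<bar>partial1 u z\<bar> \<partial>lborel)
        * (\<integral>z. \<bar>u z\<bar> powr (t - 1) * \<bar>partial2 u z\<bar> \<partial>lborel)"
proof -
  define H1 where "H1 z = s * \<bar>u z\<bar> powr (s - 1) * \<bar>partial1 u z\<bar>" for z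
  define H2 where "H2 z = t * \<bar>u z\<bar> powr (t - 1) * \<bar>partial2 u z\<bar>" for z
  define F where "F = (\<lambda>y. \<integral>x. H1 (x, y) \<partial>lborel)"
  define G where "G = (\<lambda>x. \<integral>y. H2 (x, y) \<partial>lborel)"
  have "integrable lborel H1" "integrable lborel H2" "integrable lborel (\<lambda>z. \<bar>u z\<bar> powr (s + t))"
    unfolding H1_def H2_def using s t
    by (auto intro!: integrable_vanishing_outside_support continuous_intros continuous_on_abs_powr
        continuous_on_partial1 continuous_on_partial2 simp: eq_0_outside_support)
  then have H1: "integrable (lborel \<Otimes>\<^sub>M lborel) (\<lambda>(x, y). H1 (x, y))"
    and H2: "integrable (lborel \<Otimes>\<^sub>M lborel) (\<lambda>(x, y). H2 (x, y))"
    and P: "integrable (lborel \<Otimes>\<^sub>M lborel) (\<lambda>z. \<bar>u z\<bar> powr (s + t))"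
    by (simp_all add: lborel_prod)
  have F_bound: "\<bar>u (x, y)\<bar> powr s \<le> F y" for x y
    unfolding F_def H1_def
  proof (rule abs_powr_le_integral_abs_powr_deriv[OF s has_real_derivative_partial1 _ compact_fst_support])
    show "continuous_on UNIV (\<lambda>\<tau>. partial1 u (\<tau>, y))"
      by (rule continuous_on_compose2[OF continuous_on_partial1]) (auto intro: continuous_intros)
    show "u (\<tau>, y) = 0" if "\<tau> \<notin> fst ` support" for \<tau>
      using that eq_0_outside_support by force
  qed
  have G_bound: "\<bar>u (x, y)\<bar> powr t \<le> G x" for x y
    unfolding G_def H2_def
  proof (rule abs_powr_le_integral_abs_powr_deriv[OF t has_real_derivative_partial2 _ compact_snd_support])
    show "continuous_on UNIV (\<lambda>\<tau>. partial2 u (x, \<tau>))"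
      by (rule continuous_on_compose2[OF continuous_on_partial2]) (auto intro: continuous_intros)
    show "u (x, \<tau>) = 0" if "\<tau> \<notin> snd ` support" for \<tau>
      using that eq_0_outside_support by force
  qed
  have product_bound: "\<bar>u (x, y)\<bar> powr (s + t) \<le> G x * F y" for x y
  proof -
    have "\<bar>u (x, y)\<bar> powr (s + t) = \<bar>u (x, y)\<bar> powr t * \<bar>u (x, y)\<bar> powr s"
      by (simp add: powr_add mult.commute)
    also have "\<dots> \<le> G x * F y"
      by (rule mult_mono[OF G_bound F_bound]) (use order_trans[OF powr_ge_zero G_bound] in auto)
    finally show ?thesis .
  qed
  have "integrable lborel G" "integrable lborel F"
    unfolding G_def F_def using lborel_pair.integrable_fst[OF H2] lborel_pair.integrable_snd[OF H1] .
  then have "(\<integral>z. \<bar>u z\<bar> powr (s + t) \<partial>(lborel \<Otimes>\<^sub>M lborel)) \<le> integral\<^sup>L lborel G * integral\<^sup>L lborel F"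
    by (rule lborel_pair.integral_le_mult_integral_if_le_mult[OF P _ _ product_bound])
  also have "\<dots> = (\<integral>z. H2 z \<partial>lborel) * (\<integral>z. H1 z \<partial>lborel)"
    using lborel_pair.integral_fst[OF H2] lborel_pair.integral_snd[OF H1]
    by (simp add: F_def G_def lborel_prod)
  finally show ?thesis
    by (simp add: lborel_prod H1_def H2_def ac_simps)
qed

lemma integral_abs_powr_mult_le:
  fixes D :: "real \<times> real \<Rightarrow> real"
  assumes D: "continuous_on UNIV D" "\<And>z. z \<notin> support \<Longrightarrow> D z = 0"
    and m: "1 < m" and a: "0 < a"
  shows "(\<integral>z. \<bar>u z\<bar> powr a * \<bar>D z\<bar> \<partial>lborel)
    \<le> (\<integral>z. \<bar>u z\<bar> powr (a * m / (m - 1)) \<partial>lborel) powr ((m - 1) / m)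
      * (\<integral>z. \<bar>D z\<bar> powr m \<partial>lborel) powr (1 / m)"
proof -
  have "(\<integral>z. \<bar>u z\<bar> powr a * \<bar>D z\<bar> \<partial>lborel)
    \<le> (\<integral>z. (\<bar>u z\<bar> powr a) powr (m / (m - 1)) \<partial>lborel) powr (1 / (m / (m - 1)))
      * (\<integral>z. \<bar>D z\<bar> powr m \<partial>lborel) powr (1 / m)"
  proof (rule Holder_inequality)
    show "1 < m / (m - 1)" "1 / (m / (m - 1)) + 1 / m = 1"
      using m by (simp_all add: field_simps)
    show "integrable lborel (\<lambda>z. \<bar>u z\<bar> powr a * \<bar>D z\<bar>)"
      "integrable lborel (\<lambda>z. (\<bar>u z\<bar> powr a) powr (m / (m - 1)))"
      "integrable lborel (\<lambda>z. \<bar>D z\<bar> powr m)"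
      using D m a
      by (auto simp: powr_powr eq_0_outside_support intro!: integrable_vanishing_outside_support
          continuous_intros continuous_on_abs_powr continuous_on_powr')
  qed (use m in auto)
  then show ?thesis
    using m by (simp add: powr_powr)
qed

lemma anisotropic_Sobolev_inequality:
  assumes m: "1 < m" and r: "1 < r" and p: "0 < p" "p * (1 / m + 1 / r - 1) = 2"
  shows "(\<integral>z. \<bar>u z\<bar> powr p \<partial>lborel) powr (1 / m + 1 / r - 1)
    \<le> (p * (m - 1) / m + 1) * (p * (r - 1) / r + 1)
      * (\<integral>z. \<bar>partial1 u z\<bar> powr m \<partial>lborel) powr (1 / m)
      * (\<integral>z. \<bar>partial2 u z\<bar> powr r \<partial>lborel) powr (1 / r)"
proof -
  define s where "s = p * (m - 1) / m + 1"
  define t where "t = p * (r - 1) / r + 1"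
  define I where "I = (\<integral>z. \<bar>u z\<bar> powr p \<partial>lborel)"
  define A where "A = (\<integral>z. \<bar>partial1 u z\<bar> powr m \<partial>lborel) powr (1 / m)"
  define B where "B = (\<integral>z. \<bar>partial2 u z\<bar> powr r \<partial>lborel) powr (1 / r)"
  have "1 < s" "1 < t"
    using m r p by (simp_all add: s_def t_def)
  have "s + t = p" "(s - 1) * m / (m - 1) = p" "(t - 1) * r / (r - 1) = p"
    using m r p(2) by (simp_all add: s_def t_def field_simps)
  have Holder1: "(\<integral>z. \<bar>u z\<bar> powr (s - 1) * \<bar>partial1 u z\<bar> \<partial>lborel) \<le> I powr ((m - 1) / m) * A"
    using integral_abs_powr_mult_le[OF continuous_on_partial1 partial1_eq_0_outside_support m, of "s - 1"]
      \<open>1 < s\<close> \<open>(s - 1) * m / (m - 1) = p\<close> by (simp add: I_def A_def)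
  have Holder2: "(\<integral>z. \<bar>u z\<bar> powr (t - 1) * \<bar>partial2 u z\<bar> \<partial>lborel) \<le> I powr ((r - 1) / r) * B"
    using integral_abs_powr_mult_le[OF continuous_on_partial2 partial2_eq_0_outside_support r, of "t - 1"]
      \<open>1 < t\<close> \<open>(t - 1) * r / (r - 1) = p\<close> by (simp add: I_def B_def)
  have "I \<le> s * t * (\<integral>z. \<bar>u z\<bar> powr (s - 1) * \<bar>partial1 u z\<bar> \<partial>lborel)
      * (\<integral>z. \<bar>u z\<bar> powr (t - 1) * \<bar>partial2 u z\<bar> \<partial>lborel)"
    using integral_abs_powr_le_product[OF \<open>1 < s\<close> \<open>1 < t\<close>] \<open>s + t = p\<close> by (simp add: I_def)
  also have "\<dots> \<le> s * t * (I powr ((m - 1) / m) * A) * (I powr ((r - 1) / r) * B)"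
    using Holder1 Holder2 \<open>1 < s\<close> \<open>1 < t\<close>
    by (intro mult_mono mult_nonneg_nonneg integral_nonneg) (auto simp: A_def B_def)
  also have "\<dots> = (s * t * A * B) * I powr ((m - 1) / m + (r - 1) / r)"
    by (simp add: powr_add)
  finally have "I powr (1 - ((m - 1) / m + (r - 1) / r)) \<le> s * t * A * B"
    by (rule powr_one_minus_le_if_le_mult_powr[rotated 2])
      (use \<open>1 < s\<close> \<open>1 < t\<close> in \<open>auto simp: I_def A_def B_def\<close>)
  moreover have "1 - ((m - 1) / m + (r - 1) / r) = 1 / m + 1 / r - 1"
    using m r by (simp add: field_simps)
  ultimately show ?thesis
    by (simp add: s_def t_def I_def A_def B_def)
qed

end

lemma C_infty_0_imp_C1_compact_support: "C_infty_0 u \<Longrightarrow> C1_compact_support u"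
  by (simp add: C_infty_0_def smooth2_def C1_compact_support_def)

lemma anisotropic_Sobolev_constant_2:
  fixes q :: real
  assumes "1 < q" "q < 2"
  shows "0 < 4 * q^2 - (2 - q)^2"
    and "(4 * q / (2 - q) * (2 - 1) / 2 + 1) * (4 * q / (2 - q) * (q - 1) / q + 1)
      = (4 * q^2 - (2 - q)^2) / (2 - q)^2"
proof -
  have factorization: "4 * q^2 - (2 - q)^2 = (3 * q - 2) * (q + 2)"
    by (simp add: power2_eq_square algebra_simps)
  then show "0 < 4 * q^2 - (2 - q)^2"
    using assms by simp
  have "4 * q / (2 - q) * (2 - 1) / 2 + 1 = (q + 2) / (2 - q)"
    "4 * q / (2 - q) * (q - 1) / q + 1 = (3 * q - 2) / (2 - q)"
    using assms by (simp_all add: field_simps)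
  then show "(4 * q / (2 - q) * (2 - 1) / 2 + 1) * (4 * q / (2 - q) * (q - 1) / q + 1)
      = (4 * q^2 - (2 - q)^2) / (2 - q)^2"
    unfolding factorization by (simp add: power2_eq_square)
qed

theorem lemmaB1:
  fixes q :: real and u :: "real \<times> real \<Rightarrow> real"
  assumes "1 < q" and "q < 2" and "C_infty_0 u"
  shows "(2 - q)^2 / (4 * q^2 - (2 - q)^2) > 0 \<and>
    ((2 - q)^2 / (4 * q^2 - (2 - q)^2)) *
      (\<integral>x. \<bar>u x\<bar> powr (4 * q / (2 - q)) \<partial>lborel) powr ((2 - q) / (2 * q))
    \<le> (\<integral>x. \<bar>partial1 u x\<bar> powr 2 \<partial>lborel) powr (1 / 2) *
       (\<integral>x. \<bar>partial2 u x\<bar> powr q \<partial>lborel) powr (1 / q)"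
proof -
  interpret C1_compact_support u
    using assms(3) by (rule C_infty_0_imp_C1_compact_support)
  have "0 < 4 * q / (2 - q)" "4 * q / (2 - q) * (1 / 2 + 1 / q - 1) = 2"
    and exponent: "1 / 2 + 1 / q - 1 = (2 - q) / (2 * q)"
    using assms(1,2) by (simp_all add: field_simps)
  from anisotropic_Sobolev_inequality[OF _ assms(1) this(1,2)]
  have "(\<integral>x. \<bar>u x\<bar> powr (4 * q / (2 - q)) \<partial>lborel) powr ((2 - q) / (2 * q))
    \<le> (4 * q^2 - (2 - q)^2) / (2 - q)^2 * (\<integral>x. \<bar>partial1 u x\<bar> powr 2 \<partial>lborel) powr (1 / 2)
      * (\<integral>x. \<bar>partial2 u x\<bar> powr q \<partial>lborel) powr (1 / q)"
    unfolding exponent anisotropic_Sobolev_constant_2(2)[OF assms(1,2)] by simp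
  then show ?thesis
    using anisotropic_Sobolev_constant_2(1)[OF assms(1,2)] assms(2)
    by (simp add: field_simps)
qed

end
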